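(* Let $A_1A_2A_3$ be a gyrotriangle possessing a circumgyrocircle in the Einstein gyrovector space $\mathbb{R}^n_s$, $n\ge2$, $\gamma_{ij}=\gamma_{\ominus A_i\oplus A_j}$. For a parameter $0\le t_1\le1$ let $$P=\frac{(1-t_1)\gamma_{A_1}A_1+t_1\gamma_{A_2}A_2}{(1-t_1)\gamma_{A_1}+t_1\gamma_{A_2}}$$ (a point of the gyrosegment $A_1A_2$), and let $Q$ be the foot of the corresponding circumgyrocevian, i.e. the point other than $A_3$ where the gyroray from $A_3$ through $P$ meets the circumgyrocircle. Then $Q=\frac{m_1\gamma_{A_1}A_1+m_2\gamma_{A_2}A_2+m_3\gamma_{A_3}A_3}{m_1\gamma_{A_1}+m_2\gamma_{A_2}+m_3\gamma_{A_3}}$ with $m_1=\{\gamma_{13}-1+(\gamma_{23}-\gamma_{13})t_1\}(1-t_1)$, $m_2=\{\gamma_{13}-1+(\gamma_{23}-\gamma_{13})t_1\}t_1$, $m_3=-(\gamma_{12}-1)(1-t_1)t_1$.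
   Context: Fix $s>0$; $\mathbb{R}^n_s=\{v\in\mathbb{R}^n:\|v\|<s\}$ with Einstein addition $u\oplus v=\frac{1}{1+u\cdot v/s^2}\{u+\frac{1}{\gamma_u}v+\frac{1}{s^2}\frac{\gamma_u}{1+\gamma_u}(u\cdot v)u\}$, $\gamma_v=(1-\|v\|^2/s^2)^{-1/2}$, $\ominus v=-v$; gyrodistance $\|\ominus X\oplus Y\|$. Gyrosegments/gyrorays are Euclidean segments/rays intersected with the ball. A gyrotriangle $A_1A_2A_3$ has $\ominus A_1\oplus A_2,\ominus A_1\oplus A_3$ linearly independent; its circumgyrocircle is the set of points of the gyroplane $(A_1\oplus\mathrm{span}\{\ominus A_1\oplus A_2,\ominus A_1\oplus A_3\})\cap\mathbb{R}^n_s$ at gyrodistance $R$ from the point $O$ of that gyroplane equigyrodistant (distance $R$) from the vertices. Gyrobarycentric coordinates are homogeneous. *)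

theory Defs
  imports "HOL-Analysis.Analysis"
begin

definition sball :: "real \<Rightarrow> ('a::real_inner) set" where
  "sball s = {v. norm v < s}"

definition egamma :: "real \<Rightarrow> 'a::real_inner \<Rightarrow> real" where
  "egamma s v = 1 / sqrt (1 - (norm v)\<^sup>2 / s\<^sup>2)"

definition eadd :: "real \<Rightarrow> 'a::real_inner \<Rightarrow> 'a \<Rightarrow> 'a" where
  "eadd s u v = (1 / (1 + (u \<bullet> v) / s\<^sup>2)) *\<^sub>R
     (u + (1 / egamma s u) *\<^sub>R v
        + ((1 / s\<^sup>2) * (egamma s u / (1 + egamma s u)) * (u \<bullet> v)) *\<^sub>R u)"

text \<open>gyrodistance \<open>\<parallel>\<ominus>X \<oplus> Y\<parallel>\<close>, with \<open>\<ominus>X = -X\<close>\<close>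
definition gyrodist :: "real \<Rightarrow> 'a::real_inner \<Rightarrow> 'a \<Rightarrow> real" where
  "gyrodist s X Y = norm (eadd s (- X) Y)"

definition gyrotriangle :: "real \<Rightarrow> 'a::real_inner \<Rightarrow> 'a \<Rightarrow> 'a \<Rightarrow> bool" where
  "gyrotriangle s A1 A2 A3 \<longleftrightarrow> A1 \<in> sball s \<and> A2 \<in> sball s \<and> A3 \<in> sball s \<and>
     independent {eadd s (- A1) A2, eadd s (- A1) A3} \<and>
     eadd s (- A1) A2 \<noteq> eadd s (- A1) A3"

definition gyroplane :: "real \<Rightarrow> 'a::real_inner \<Rightarrow> 'a \<Rightarrow> 'a \<Rightarrow> 'a set" where
  "gyroplane s A1 A2 A3 =
     (eadd s A1 ` span {eadd s (- A1) A2, eadd s (- A1) A3}) \<inter> sball s"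

definition circumcenter :: "real \<Rightarrow> 'a::real_inner \<Rightarrow> 'a \<Rightarrow> 'a \<Rightarrow> 'a \<Rightarrow> real \<Rightarrow> bool" where
  "circumcenter s A1 A2 A3 C R \<longleftrightarrow> C \<in> gyroplane s A1 A2 A3 \<and>
     gyrodist s C A1 = R \<and> gyrodist s C A2 = R \<and> gyrodist s C A3 = R"

definition has_circumgyrocircle :: "real \<Rightarrow> 'a::real_inner \<Rightarrow> 'a \<Rightarrow> 'a \<Rightarrow> bool" where
  "has_circumgyrocircle s A1 A2 A3 \<longleftrightarrow> (\<exists>C R. circumcenter s A1 A2 A3 C R)"

definition circumgyrocircle :: "real \<Rightarrow> 'a::real_inner \<Rightarrow> 'a \<Rightarrow> 'a \<Rightarrow> 'a set" where
  "circumgyrocircle s A1 A2 A3 =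
     {X \<in> gyroplane s A1 A2 A3. \<exists>C R. circumcenter s A1 A2 A3 C R \<and> gyrodist s C X = R}"

definition gyroray :: "real \<Rightarrow> 'a::real_inner \<Rightarrow> 'a \<Rightarrow> 'a set" where
  "gyroray s A B = {A + l *\<^sub>R (B - A) | l. l \<ge> 0} \<inter> sball s"

end

theory Submission
  imports Defs
begin

text \<open>
  By the gamma identity \<open>\<gamma>(\<ominus>X \<oplus> Y) = \<gamma>\<^sub>X \<gamma>\<^sub>Y (1 - X\<cdot>Y/s\<^sup>2)\<close>, a point \<open>X\<close> lies at
  gyrodistance \<open>R\<close> from the circumgyrocentre \<open>C\<close> iff \<open>\<gamma>\<^sub>X (1 - C\<cdot>X/s\<^sup>2)\<close> equals a constant
  \<open>K > 0\<close>; this condition is linear in \<open>(\<gamma>\<^sub>X, \<gamma>\<^sub>X X)\<close>. If \<open>Q\<close> has normalized gyrobarycentric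
  coordinates \<open>(b\<^sub>1, b\<^sub>2, b\<^sub>3)\<close>, linearity gives \<open>\<gamma>\<^sub>Q (b\<^sub>1 + b\<^sub>2 + b\<^sub>3) = 1\<close>, while the same
  identity expresses \<open>1 - |Q|\<^sup>2/s\<^sup>2\<close> as the quadratic form \<open>\<Sum> b\<^sub>i b\<^sub>j \<gamma>\<^sub>i\<^sub>j\<close> (with
  \<open>\<gamma>\<^sub>i\<^sub>i = 1\<close>). Comparing the two yields the circumgyrocircle equation
  \<open>b\<^sub>1 b\<^sub>2 (\<gamma>\<^sub>1\<^sub>2 - 1) + b\<^sub>1 b\<^sub>3 (\<gamma>\<^sub>1\<^sub>3 - 1) + b\<^sub>2 b\<^sub>3 (\<gamma>\<^sub>2\<^sub>3 - 1) = 0\<close>.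
  On the gyrocevian from \<open>A\<^sub>3\<close> through \<open>P\<close> the coordinates have the form
  \<open>(\<alpha>(1 - t\<^sub>1), \<alpha> t\<^sub>1, b\<^sub>3)\<close> with \<open>\<alpha> \<noteq> 0\<close>, so after dividing by \<open>\<alpha>\<close> the equation is linear in
  \<open>b\<^sub>3\<close>; its coefficient \<open>(1 - t\<^sub>1)(\<gamma>\<^sub>1\<^sub>3 - 1) + t\<^sub>1(\<gamma>\<^sub>2\<^sub>3 - 1)\<close> is positive because the
  sides of a gyrotriangle have gamma factors \<open>> 1\<close>, which pins down \<open>Q\<close>.
\<close>

lemma one_minus_norm_sq_pos:
  assumes "norm (u::'a::real_inner) < s"
  shows "1 - (norm u)\<^sup>2 / s\<^sup>2 > 0"
proof -
  have "0 < s" using assms norm_ge_zero by (rule le_less_trans[rotated])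
  moreover have "(norm u)\<^sup>2 < s\<^sup>2" using assms by (simp add: power_strict_mono)
  ultimately show ?thesis by simp
qed

lemma egamma_pos: "norm (u::'a::real_inner) < s \<Longrightarrow> egamma s u > 0"
  unfolding egamma_def using one_minus_norm_sq_pos[of u s] by (intro divide_pos_pos) auto

lemma egamma_sq:
  assumes "norm (u::'a::real_inner) < s"
  shows "(egamma s u)\<^sup>2 * (1 - (norm u)\<^sup>2 / s\<^sup>2) = 1"
proof -
  have "(1 / sqrt z)\<^sup>2 * z = 1" if "z > 0" for z :: real
    using that by (simp add: power_divide)
  then show ?thesis using one_minus_norm_sq_pos[OF assms] by (simp add: egamma_def)
qed

lemma egamma_minus [simp]: "egamma s (- u) = egamma s u"
  by (simp add: egamma_def)

lemma one_minus_inner_pos: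
  assumes "norm (x::'a::real_inner) < s" and "norm y < s"
  shows "1 - (x \<bullet> y) / s\<^sup>2 > 0"
proof -
  have "s > 0" using assms(1) norm_ge_zero by (rule le_less_trans[rotated])
  have "x \<bullet> y \<le> norm x * norm y" by (rule norm_cauchy_schwarz)
  also have "\<dots> < s * s" using assms by (simp add: mult_strict_mono')
  finally have "x \<bullet> y < s\<^sup>2" by (simp add: power2_eq_square)
  then show ?thesis using \<open>s > 0\<close> by simp
qed

lemma egamma_gt_1:
  assumes "norm (w::'a::real_inner) < s" and "w \<noteq> 0"
  shows "egamma s w > 1"
proof -
  have pos: "1 - (norm w)\<^sup>2 / s\<^sup>2 > 0" using assms(1) by (rule one_minus_norm_sq_pos)
  have "s \<noteq> 0" using assms(1) by auto
  then have "1 - (norm w)\<^sup>2 / s\<^sup>2 < 1" using assms(2) by simp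
  then have "sqrt (1 - (norm w)\<^sup>2 / s\<^sup>2) < 1" using pos by simp
  then show ?thesis using pos by (simp add: egamma_def)
qed

lemma norm_eadd:
  fixes u v :: "'a::real_inner"
  assumes u: "norm u < s" and T: "1 + (u \<bullet> v) / s\<^sup>2 \<noteq> 0"
  shows "(1 + (u \<bullet> v) / s\<^sup>2)\<^sup>2 * (1 - (norm (eadd s u v))\<^sup>2 / s\<^sup>2)
           = (1 - (norm u)\<^sup>2 / s\<^sup>2) * (1 - (norm v)\<^sup>2 / s\<^sup>2)"
proof -
  define g where "g = egamma s u"
  define c where "c = (1 / s\<^sup>2) * (g / (1 + g)) * (u \<bullet> v)"
  define N where "N = (1 + c) *\<^sub>R u + (1 / g) *\<^sub>R v"
  have g: "g > 0" "g\<^sup>2 * (1 - (u \<bullet> u) / s\<^sup>2) = 1"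
    using egamma_pos[OF u] egamma_sq[OF u] by (simp_all add: g_def power2_norm_eq_inner)
  have "s \<noteq> 0" using u by auto
  have eadd_N: "eadd s u v = (1 / (1 + (u \<bullet> v) / s\<^sup>2)) *\<^sub>R N"
    unfolding eadd_def N_def c_def g_def by (simp add: algebra_simps)
  have NN: "N \<bullet> N = (1 + c)\<^sup>2 * (u \<bullet> u) + 2 * (1 + c) * (u \<bullet> v) / g + (v \<bullet> v) / g\<^sup>2"
    unfolding N_def
    by (simp add: inner_add_left inner_add_right inner_commute power2_eq_square algebra_simps add_divide_distrib)
  define si where "si = 1 / s\<^sup>2"
  define gi where "gi = 1 / g"
  define h where "h = 1 / (1 + g)"
  \<comment> \<open>with the reciprocals named, the identity is polynomial modulo \<open>g\<^sup>2 (1 - |u|\<^sup>2/s\<^sup>2) = 1\<close>\<close>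
  have "si * s\<^sup>2 = 1" "gi * g = 1" "h * (1 + g) = 1" "g\<^sup>2 * (1 - (u \<bullet> u) * si) = 1"
    using g \<open>s \<noteq> 0\<close> by (simp_all add: si_def gi_def h_def)
  moreover have "c = si * g * h * (u \<bullet> v)" by (simp add: c_def si_def h_def)
  moreover have "N \<bullet> N = (1 + c)\<^sup>2 * (u \<bullet> u) + 2 * (1 + c) * (u \<bullet> v) * gi + (v \<bullet> v) * gi\<^sup>2"
    unfolding NN gi_def by (simp add: field_simps)
  ultimately have "(1 + (u \<bullet> v) * si)\<^sup>2 - N \<bullet> N * si = (1 - (u \<bullet> u) * si) * (1 - (v \<bullet> v) * si)"
    by algebra
  then have "(1 + (u \<bullet> v) / s\<^sup>2)\<^sup>2 - N \<bullet> N / s\<^sup>2 = (1 - (u \<bullet> u) / s\<^sup>2) * (1 - (v \<bullet> v) / s\<^sup>2)"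
    by (simp add: si_def)
  moreover have "(norm (eadd s u v))\<^sup>2 = N \<bullet> N / (1 + (u \<bullet> v) / s\<^sup>2)\<^sup>2"
    unfolding eadd_N power2_norm_eq_inner by (simp add: power2_eq_square)
  ultimately show ?thesis
    using T by (simp add: power2_norm_eq_inner field_simps)
qed

lemma egamma_eadd:
  fixes u v :: "'a::real_inner"
  assumes u: "norm u < s" and v: "norm v < s"
  shows "norm (eadd s u v) < s"
    and "egamma s (eadd s u v) = egamma s u * egamma s v * (1 + (u \<bullet> v) / s\<^sup>2)"
proof -
  have "s > 0" using u norm_ge_zero by (rule le_less_trans[rotated])
  define T where "T = 1 + (u \<bullet> v) / s\<^sup>2"
  define Au where "Au = 1 - (norm u)\<^sup>2 / s\<^sup>2"
  define Av where "Av = 1 - (norm v)\<^sup>2 / s\<^sup>2"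
  have T: "T > 0" using one_minus_inner_pos[of "- u" s v] u v by (simp add: T_def)
  have Au: "Au > 0" and Av: "Av > 0"
    using one_minus_norm_sq_pos u v by (auto simp: Au_def Av_def)
  have "T\<^sup>2 * (1 - (norm (eadd s u v))\<^sup>2 / s\<^sup>2) = Au * Av"
    using norm_eadd[OF u] T unfolding T_def Au_def Av_def by simp
  then have Z: "1 - (norm (eadd s u v))\<^sup>2 / s\<^sup>2 = Au * Av / T\<^sup>2"
    using T by (simp add: field_simps)
  moreover have "Au * Av / T\<^sup>2 > 0" using Au Av T by simp
  ultimately have "(norm (eadd s u v))\<^sup>2 / s\<^sup>2 < 1" by linarith
  then have "(norm (eadd s u v))\<^sup>2 < s\<^sup>2" using \<open>s > 0\<close> by simp
  then show "norm (eadd s u v) < s" using \<open>s > 0\<close> by (simp add: power2_less_imp_less)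
  have "egamma s (eadd s u v) = T / (sqrt Au * sqrt Av)"
    unfolding egamma_def Z using Au Av T by (simp add: real_sqrt_divide real_sqrt_mult)
  then show "egamma s (eadd s u v) = egamma s u * egamma s v * (1 + (u \<bullet> v) / s\<^sup>2)"
    by (simp add: egamma_def Au_def Av_def T_def)
qed

lemma egamma_eadd_minus:
  fixes x y :: "'a::real_inner"
  assumes "norm x < s" and "norm y < s"
  shows "egamma s (eadd s (- x) y) = egamma s x * egamma s y * (1 - (x \<bullet> y) / s\<^sup>2)"
  using egamma_eadd(2)[of "- x" s y] assms by simp

lemma egamma_eadd_gt_1:
  fixes u v :: "'a::real_inner"
  assumes u: "norm u < s" and v: "norm v < s" and uv: "u + v \<noteq> 0"
  shows "egamma s (eadd s u v) > 1"
proof -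
  have "s > 0" using u norm_ge_zero by (rule le_less_trans[rotated])
  define T where "T = 1 + (u \<bullet> v) / s\<^sup>2"
  define Au where "Au = 1 - (norm u)\<^sup>2 / s\<^sup>2"
  define Av where "Av = 1 - (norm v)\<^sup>2 / s\<^sup>2"
  have Au: "Au > 0" and Av: "Av > 0"
    using one_minus_norm_sq_pos u v by (auto simp: Au_def Av_def)
  define z where "z = u + v"
  have v_eq: "v = z - u" by (simp add: z_def)
  have "u \<bullet> u < s\<^sup>2" using one_minus_inner_pos[OF u u] \<open>s > 0\<close> by (simp add: field_simps)
  moreover have "z \<bullet> z > 0" using uv by (simp add: z_def)
  ultimately have "(u \<bullet> z)\<^sup>2 + (s\<^sup>2 - u \<bullet> u) * (z \<bullet> z) > 0"
    by (simp add: add_nonneg_pos)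
  moreover have "s\<^sup>2 * s\<^sup>2 * (T\<^sup>2 - Au * Av) = (u \<bullet> z)\<^sup>2 + (s\<^sup>2 - u \<bullet> u) * (z \<bullet> z)"
    unfolding T_def Au_def Av_def power2_norm_eq_inner v_eq using \<open>s > 0\<close>
    by (simp add: inner_diff_left inner_diff_right inner_commute field_simps power2_eq_square)
  ultimately have "s\<^sup>2 * s\<^sup>2 * (T\<^sup>2 - Au * Av) > 0" by linarith
  then have T_gt: "T\<^sup>2 > Au * Av" using \<open>s > 0\<close> by (simp add: zero_less_mult_iff)
  have "egamma s (eadd s u v) = egamma s u * egamma s v * T"
    using egamma_eadd(2)[OF u v] by (simp add: T_def)
  then have "(egamma s (eadd s u v))\<^sup>2 * (Au * Av)
      = ((egamma s u)\<^sup>2 * Au) * ((egamma s v)\<^sup>2 * Av) * T\<^sup>2"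
    by (simp add: power_mult_distrib mult_ac)
  then have "(egamma s (eadd s u v))\<^sup>2 * (Au * Av) = T\<^sup>2"
    using egamma_sq[OF u] egamma_sq[OF v] by (simp add: Au_def Av_def)
  then have "1 * (Au * Av) < (egamma s (eadd s u v))\<^sup>2 * (Au * Av)" using T_gt by simp
  then have "1\<^sup>2 < (egamma s (eadd s u v))\<^sup>2"
    unfolding mult_less_cancel_right_pos[OF mult_pos_pos[OF Au Av]] by simp
  then show ?thesis
    using egamma_pos[OF egamma_eadd(1)[OF u v]] by (auto intro: power2_less_imp_less)
qed

lemma egamma_inner_eq_of_gyrodist_eq:
  fixes C X Y :: "'a::real_inner"
  assumes C: "norm C < s" and X: "norm X < s" and Y: "norm Y < s"
    and "gyrodist s C X = gyrodist s C Y"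
  shows "egamma s X * (1 - (C \<bullet> X) / s\<^sup>2) = egamma s Y * (1 - (C \<bullet> Y) / s\<^sup>2)"
proof -
  have "egamma s (eadd s (- C) X) = egamma s (eadd s (- C) Y)"
    using assms(4) by (simp add: gyrodist_def egamma_def)
  then have "egamma s C * (egamma s X * (1 - (C \<bullet> X) / s\<^sup>2))
      = egamma s C * (egamma s Y * (1 - (C \<bullet> Y) / s\<^sup>2))"
    by (simp add: egamma_eadd_minus[OF C X] egamma_eadd_minus[OF C Y] mult.assoc)
  then show ?thesis using egamma_pos[OF C] by simp
qed

definition gyrobarycentric ::
    "real \<Rightarrow> 'a::real_inner \<Rightarrow> 'a \<Rightarrow> 'a \<Rightarrow> real \<Rightarrow> real \<Rightarrow> real \<Rightarrow> 'a" where
  "gyrobarycentric s A1 A2 A3 m1 m2 m3 =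
     (1 / (m1 * egamma s A1 + m2 * egamma s A2 + m3 * egamma s A3)) *\<^sub>R
       ((m1 * egamma s A1) *\<^sub>R A1 + (m2 * egamma s A2) *\<^sub>R A2 + (m3 * egamma s A3) *\<^sub>R A3)"

lemma gyrobarycentric_proportional:
  assumes "c \<noteq> 0" and "m1' = c * m1" and "m2' = c * m2" and "m3' = c * m3"
  shows "gyrobarycentric s A1 A2 A3 m1' m2' m3' = gyrobarycentric s A1 A2 A3 m1 m2 m3"
proof -
  have "c * m1 * egamma s A1 + c * m2 * egamma s A2 + c * m3 * egamma s A3
      = c * (m1 * egamma s A1 + m2 * egamma s A2 + m3 * egamma s A3)"
    by (simp add: algebra_simps)
  moreover have "(c * m1 * egamma s A1) *\<^sub>R A1 + (c * m2 * egamma s A2) *\<^sub>R A2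
        + (c * m3 * egamma s A3) *\<^sub>R A3
      = c *\<^sub>R ((m1 * egamma s A1) *\<^sub>R A1 + (m2 * egamma s A2) *\<^sub>R A2
        + (m3 * egamma s A3) *\<^sub>R A3)"
    by (simp add: scaleR_add_right mult.assoc)
  ultimately show ?thesis
    using assms by (simp add: gyrobarycentric_def)
qed

lemma one_minus_norm_sq_gyrobarycentric:
  fixes A1 A2 A3 :: "'a::real_inner"
  assumes a1: "norm A1 < s" and a2: "norm A2 < s" and a3: "norm A3 < s"
    and normalized: "b1 * egamma s A1 + b2 * egamma s A2 + b3 * egamma s A3 = 1"
  shows "1 - (norm (gyrobarycentric s A1 A2 A3 b1 b2 b3))\<^sup>2 / s\<^sup>2
    = b1\<^sup>2 + b2\<^sup>2 + b3\<^sup>2 + 2 * b1 * b2 * egamma s (eadd s (- A1) A2)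
      + 2 * b1 * b3 * egamma s (eadd s (- A1) A3) + 2 * b2 * b3 * egamma s (eadd s (- A2) A3)"
proof -
  define G1 where "G1 = egamma s A1"
  define G2 where "G2 = egamma s A2"
  define G3 where "G3 = egamma s A3"
  define si where "si = 1 / s\<^sup>2"
  define Q where "Q = gyrobarycentric s A1 A2 A3 b1 b2 b3"
  have Q: "Q = (b1 * G1) *\<^sub>R A1 + (b2 * G2) *\<^sub>R A2 + (b3 * G3) *\<^sub>R A3"
    using normalized by (simp add: Q_def gyrobarycentric_def G1_def G2_def G3_def)
  have QQ: "Q \<bullet> Q = (b1 * G1)\<^sup>2 * (A1 \<bullet> A1) + (b2 * G2)\<^sup>2 * (A2 \<bullet> A2) + (b3 * G3)\<^sup>2 * (A3 \<bullet> A3)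
      + 2 * (b1 * G1) * (b2 * G2) * (A1 \<bullet> A2) + 2 * (b1 * G1) * (b3 * G3) * (A1 \<bullet> A3)
      + 2 * (b2 * G2) * (b3 * G3) * (A2 \<bullet> A3)"
    unfolding Q by (simp add: inner_add_left inner_add_right inner_commute power2_eq_square algebra_simps)
  have "G1\<^sup>2 * (1 - (A1 \<bullet> A1) * si) = 1" "G2\<^sup>2 * (1 - (A2 \<bullet> A2) * si) = 1"
    "G3\<^sup>2 * (1 - (A3 \<bullet> A3) * si) = 1"
    using egamma_sq[OF a1] egamma_sq[OF a2] egamma_sq[OF a3]
    by (simp_all add: G1_def G2_def G3_def si_def power2_norm_eq_inner)
  moreover have "egamma s (eadd s (- A1) A2) = G1 * G2 * (1 - (A1 \<bullet> A2) * si)"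
    "egamma s (eadd s (- A1) A3) = G1 * G3 * (1 - (A1 \<bullet> A3) * si)"
    "egamma s (eadd s (- A2) A3) = G2 * G3 * (1 - (A2 \<bullet> A3) * si)"
    using egamma_eadd_minus a1 a2 a3 by (simp_all add: G1_def G2_def G3_def si_def)
  moreover have "1 - Q \<bullet> Q * si = (b1 * G1 + b2 * G2 + b3 * G3)\<^sup>2 - Q \<bullet> Q * si"
    using normalized by (simp add: G1_def G2_def G3_def)
  ultimately have "1 - Q \<bullet> Q * si = b1\<^sup>2 + b2\<^sup>2 + b3\<^sup>2 + 2 * b1 * b2 * egamma s (eadd s (- A1) A2)
      + 2 * b1 * b3 * egamma s (eadd s (- A1) A3) + 2 * b2 * b3 * egamma s (eadd s (- A2) A3)"
    unfolding QQ by algebra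
  then show ?thesis by (simp add: Q_def si_def power2_norm_eq_inner)
qed

lemma circumgyrocircle_gyrobarycentric_equation:
  fixes A1 A2 A3 C Q :: "'a::real_inner"
  assumes a1: "norm A1 < s" and a2: "norm A2 < s" and a3: "norm A3 < s" and q: "norm Q < s"
    and circ: "circumcenter s A1 A2 A3 C R" and "gyrodist s C Q = R"
    and normalized: "b1 * egamma s A1 + b2 * egamma s A2 + b3 * egamma s A3 = 1"
    and Q: "Q = gyrobarycentric s A1 A2 A3 b1 b2 b3"
  shows "b1 * b2 * (egamma s (eadd s (- A1) A2) - 1) + b1 * b3 * (egamma s (eadd s (- A1) A3) - 1)
    + b2 * b3 * (egamma s (eadd s (- A2) A3) - 1) = 0"
proof -
  have c: "norm C < s"
    using circ by (simp add: circumcenter_def gyroplane_def sball_def)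
  have d1: "gyrodist s C A1 = R" and d2: "gyrodist s C A2 = R" and d3: "gyrodist s C A3 = R"
    using circ by (simp_all add: circumcenter_def)
  define K where "K = egamma s A1 * (1 - (C \<bullet> A1) / s\<^sup>2)"
  have K: "egamma s X * (1 - (C \<bullet> X) / s\<^sup>2) = K"
    if "norm X < s" "gyrodist s C X = R" for X
    unfolding K_def using egamma_inner_eq_of_gyrodist_eq[OF c that(1) a1] d1 that(2) by simp
  have "K > 0"
    using egamma_pos[OF a1] one_minus_inner_pos[OF c a1] by (simp add: K_def)
  have "C \<bullet> Q = b1 * egamma s A1 * (C \<bullet> A1) + b2 * egamma s A2 * (C \<bullet> A2)
      + b3 * egamma s A3 * (C \<bullet> A3)"
    using normalized by (simp add: Q gyrobarycentric_def inner_add_right)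
  then have "1 - (C \<bullet> Q) / s\<^sup>2 = (b1 * egamma s A1 + b2 * egamma s A2 + b3 * egamma s A3)
      - (b1 * egamma s A1 * (C \<bullet> A1) + b2 * egamma s A2 * (C \<bullet> A2)
          + b3 * egamma s A3 * (C \<bullet> A3)) / s\<^sup>2"
    using normalized by simp
  also have "\<dots> = b1 * (egamma s A1 * (1 - (C \<bullet> A1) / s\<^sup>2))
      + b2 * (egamma s A2 * (1 - (C \<bullet> A2) / s\<^sup>2)) + b3 * (egamma s A3 * (1 - (C \<bullet> A3) / s\<^sup>2))"
    by (simp add: algebra_simps add_divide_distrib)
  also have "\<dots> = K * (b1 + b2 + b3)"
    unfolding K[OF a1 d1] K[OF a2 d2] K[OF a3 d3] by (simp add: algebra_simps)
  finally have "K * (egamma s Q * (b1 + b2 + b3)) = K * 1"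
    using K[OF q \<open>gyrodist s C Q = R\<close>] by (simp add: mult_ac)
  then have "egamma s Q * (b1 + b2 + b3) = 1" using \<open>K > 0\<close> by simp
  then have "(b1 + b2 + b3)\<^sup>2 = (egamma s Q)\<^sup>2 * (1 - (norm Q)\<^sup>2 / s\<^sup>2) * (b1 + b2 + b3)\<^sup>2"
    by (simp add: egamma_sq[OF q])
  also have "\<dots> = (egamma s Q * (b1 + b2 + b3))\<^sup>2 * (1 - (norm Q)\<^sup>2 / s\<^sup>2)"
    by (simp add: power_mult_distrib)
  also have "\<dots> = 1 - (norm Q)\<^sup>2 / s\<^sup>2"
    using \<open>egamma s Q * (b1 + b2 + b3) = 1\<close> by simp
  also have "\<dots> = b1\<^sup>2 + b2\<^sup>2 + b3\<^sup>2 + 2 * b1 * b2 * egamma s (eadd s (- A1) A2)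
      + 2 * b1 * b3 * egamma s (eadd s (- A1) A3) + 2 * b2 * b3 * egamma s (eadd s (- A2) A3)"
    unfolding Q by (rule one_minus_norm_sq_gyrobarycentric[OF a1 a2 a3 normalized])
  finally show ?thesis by algebra
qed

lemma gyrotriangle_egamma_sides_gt_1:
  assumes "gyrotriangle s A1 A2 A3"
  shows "egamma s (eadd s (- A1) A2) > 1" and "egamma s (eadd s (- A1) A3) > 1"
    and "egamma s (eadd s (- A2) A3) > 1"
proof -
  have a1: "norm A1 < s" and a2: "norm A2 < s" and a3: "norm A3 < s"
    and ind: "independent {eadd s (- A1) A2, eadd s (- A1) A3}"
    and "eadd s (- A1) A2 \<noteq> eadd s (- A1) A3"
    using assms by (auto simp: gyrotriangle_def sball_def)
  have "eadd s (- A1) A2 \<noteq> 0" "eadd s (- A1) A3 \<noteq> 0"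
    using ind by (metis dependent_zero insertCI)+
  then show "egamma s (eadd s (- A1) A2) > 1" "egamma s (eadd s (- A1) A3) > 1"
    using egamma_gt_1 egamma_eadd(1) a1 a2 a3 norm_minus_cancel by metis+
  show "egamma s (eadd s (- A2) A3) > 1"
    using egamma_eadd_gt_1[of "- A2" s A3] a2 a3 \<open>eadd s (- A1) A2 \<noteq> eadd s (- A1) A3\<close> by auto
qed

lemma gyroray_point_gyrobarycentric:
  fixes A1 A2 A3 P :: "'a::real_inner"
  assumes a1: "norm A1 < s" and a2: "norm A2 < s" and a3: "norm A3 < s"
    and t: "0 \<le> t" "t \<le> 1"
    and P: "P = (1 / ((1 - t) * egamma s A1 + t * egamma s A2)) *\<^sub>R
               (((1 - t) * egamma s A1) *\<^sub>R A1 + (t * egamma s A2) *\<^sub>R A2)"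
    and "l \<noteq> 0"
  obtains \<alpha> b3 where "\<alpha> \<noteq> 0"
    and "(\<alpha> * (1 - t)) * egamma s A1 + (\<alpha> * t) * egamma s A2 + b3 * egamma s A3 = 1"
    and "A3 + l *\<^sub>R (P - A3) = gyrobarycentric s A1 A2 A3 (\<alpha> * (1 - t)) (\<alpha> * t) b3"
proof -
  define D where "D = (1 - t) * egamma s A1 + t * egamma s A2"
  have "D > 0"
    unfolding D_def using t egamma_pos[OF a1] egamma_pos[OF a2]
    by (cases "t = 1") (auto intro: add_pos_nonneg add_nonneg_pos)
  define \<alpha> where "\<alpha> = l / D"
  define b3 where "b3 = (1 - l) / egamma s A3"
  have "\<alpha> \<noteq> 0" using \<open>l \<noteq> 0\<close> \<open>D > 0\<close> by (simp add: \<alpha>_def)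
  have "(\<alpha> * (1 - t)) * egamma s A1 + (\<alpha> * t) * egamma s A2 = \<alpha> * D"
    by (simp add: D_def algebra_simps)
  moreover have "\<alpha> * D = l" using \<open>D > 0\<close> by (simp add: \<alpha>_def)
  moreover have b3: "b3 * egamma s A3 = 1 - l" using egamma_pos[OF a3] by (simp add: b3_def)
  ultimately have normalized:
    "(\<alpha> * (1 - t)) * egamma s A1 + (\<alpha> * t) * egamma s A2 + b3 * egamma s A3 = 1"
    by simp
  have "l *\<^sub>R P = (\<alpha> * (1 - t) * egamma s A1) *\<^sub>R A1 + (\<alpha> * t * egamma s A2) *\<^sub>R A2"
    unfolding P D_def[symmetric] by (simp add: \<alpha>_def scaleR_add_right mult.assoc)
  then have "A3 + l *\<^sub>R (P - A3) = (\<alpha> * (1 - t) * egamma s A1) *\<^sub>R A1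
      + (\<alpha> * t * egamma s A2) *\<^sub>R A2 + (b3 * egamma s A3) *\<^sub>R A3"
    unfolding b3 by (simp add: algebra_simps)
  then have "A3 + l *\<^sub>R (P - A3) = gyrobarycentric s A1 A2 A3 (\<alpha> * (1 - t)) (\<alpha> * t) b3"
    using normalized by (simp add: gyrobarycentric_def)
  with \<open>\<alpha> \<noteq> 0\<close> normalized show thesis by (rule that)
qed

theorem mainTheorem17:
  fixes s :: real and A1 A2 A3 P Q :: "real ^ 'n" and t1 :: real
  assumes "CARD('n) \<ge> 2" and "s > 0"
    and "gyrotriangle s A1 A2 A3"
    and "has_circumgyrocircle s A1 A2 A3"
    and "0 \<le> t1" and "t1 \<le> 1"
    and "P = (1 / ((1 - t1) * egamma s A1 + t1 * egamma s A2)) *\<^sub>R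
               (((1 - t1) * egamma s A1) *\<^sub>R A1 + (t1 * egamma s A2) *\<^sub>R A2)"
    and "Q \<in> gyroray s A3 P" and "Q \<in> circumgyrocircle s A1 A2 A3" and "Q \<noteq> A3"
  shows "let g12 = egamma s (eadd s (- A1) A2);
             g13 = egamma s (eadd s (- A1) A3);
             g23 = egamma s (eadd s (- A2) A3);
             m1 = (g13 - 1 + (g23 - g13) * t1) * (1 - t1);
             m2 = (g13 - 1 + (g23 - g13) * t1) * t1;
             m3 = - (g12 - 1) * (1 - t1) * t1
         in Q = (1 / (m1 * egamma s A1 + m2 * egamma s A2 + m3 * egamma s A3)) *\<^sub>R
                  ((m1 * egamma s A1) *\<^sub>R A1 + (m2 * egamma s A2) *\<^sub>R A2
                   + (m3 * egamma s A3) *\<^sub>R A3)"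
proof -
  have a1: "norm A1 < s" and a2: "norm A2 < s" and a3: "norm A3 < s"
    using assms(3) by (auto simp: gyrotriangle_def sball_def)
  obtain C R where circ: "circumcenter s A1 A2 A3 C R" and "gyrodist s C Q = R"
    using assms(9) by (auto simp: circumgyrocircle_def)
  obtain l where Q_ray: "Q = A3 + l *\<^sub>R (P - A3)" and q: "norm Q < s"
    using assms(8) by (auto simp: gyroray_def sball_def)
  then have "l \<noteq> 0" using assms(10) by auto
  then obtain \<alpha> b3 where "\<alpha> \<noteq> 0"
    and normalized: "(\<alpha> * (1 - t1)) * egamma s A1 + (\<alpha> * t1) * egamma s A2 + b3 * egamma s A3 = 1"
    and Q_bary: "Q = gyrobarycentric s A1 A2 A3 (\<alpha> * (1 - t1)) (\<alpha> * t1) b3"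
    using gyroray_point_gyrobarycentric[OF a1 a2 a3 assms(5,6,7)] Q_ray by metis
  define g12 where "g12 = egamma s (eadd s (- A1) A2)"
  define g13 where "g13 = egamma s (eadd s (- A1) A3)"
  define g23 where "g23 = egamma s (eadd s (- A2) A3)"
  define k where "k = g13 - 1 + (g23 - g13) * t1"
  have "\<alpha> * (\<alpha> * (1 - t1) * t1 * (g12 - 1) + b3 * k) = 0"
    using circumgyrocircle_gyrobarycentric_equation
        [OF a1 a2 a3 q circ \<open>gyrodist s C Q = R\<close> normalized Q_bary]
    by (simp add: g12_def g13_def g23_def k_def algebra_simps)
  then have b3k: "b3 * k = - (\<alpha> * (1 - t1) * t1 * (g12 - 1))"
    using \<open>\<alpha> \<noteq> 0\<close> by (simp add: eq_neg_iff_add_eq_0)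
  have "(1 - t1) * (1 - g13) + t1 * (1 - g23) < 0"
    using gyrotriangle_egamma_sides_gt_1[OF assms(3)] assms(5,6)
    by (intro convex_bound_lt) (simp_all add: g13_def g23_def)
  then have "k \<noteq> 0" by (simp add: k_def algebra_simps)
  then have "Q = gyrobarycentric s A1 A2 A3 (k * (1 - t1)) (k * t1) (- (g12 - 1) * (1 - t1) * t1)"
    unfolding Q_bary using \<open>\<alpha> \<noteq> 0\<close> b3k
    by (intro gyrobarycentric_proportional[of "\<alpha> / k"]) (simp_all add: field_simps)
  then show ?thesis by (simp only: Let_def gyrobarycentric_def g12_def g13_def g23_def k_def)
qed

end
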